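(* Let $\lambda$ be a singular cardinal which is a limit of strongly compact cardinals. Then every strong system over $\lambda^+$ whose index set has cardinality $<\lambda$ has a branch of size $\lambda^+$ (i.e. a branch meeting unboundedly many levels of the system).
   Context: Systems. Let $\lambda$ be a cardinal. A $\lambda^+$-system $\mathcal S=(T,R)$ consists of: a cardinal $\tau\le\lambda$ (the width), an unbounded set $D\subseteq\lambda^+$ (the domain), levels $T_\alpha\subseteq\tau\times\{\alpha\}$ for $\alpha\in D$, an index set $I$ with $|I|\le\lambda$, and binary relations $R_i$ ($i\in I$), each a subset of $\bigcup\{T_\alpha\times T_\beta\mid \alpha<\beta \text{ in } D\}$, such that: (1) for all $\alpha<\beta$ in $D$ there are $a\in T_\alpha$, $b\in T_\beta$, $i\in I$ with $\langle a,b\rangle\in R_i$; (2) for every $i\in I$ and $\alpha<\beta<\gamma$ in $D$, if $a\in T_\alpha$, $b\in T_\beta$, $c\in T_\gamma$ with $\langle a,c\rangle\in R_i$ and $\langle b,c\rangle\in R_i$, then $\langle a,b\rangle\in R_i$. The system is strong if (1) is strengthened to: for all $\alpha<\beta$ in $D$ and every $b\in T_\beta$ there are $a\in T_\alpha$ and $i\in I$ with $\langle a,b\rangle\in R_i$. A branch of $\mathcal S$ is a set $B$ of nodes such that for some single $i\in I$, for all $a\ne b$ in $B$, $\langle a,b\rangle\in R_i$ or $\langle b,a\rangle\in R_i$. Strongly compact: every $\kappa$-complete filter extends to a $\kappa$-complete ultrafilter. *)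

theory Defs
  imports Main
begin

text \<open>Ordinals are elements of the field of a well-order; cardinals are
  cardinal-order relations (library notions Card_order, card_of, ordLess2,
  ordLeq2, ordIso2, cardSuc, regularCard from Main).\<close>

definition ord_less :: "'k rel \<Rightarrow> 'k \<Rightarrow> 'k \<Rightarrow> bool" where
  "ord_less K a b \<equiv> (a, b) \<in> K \<and> a \<noteq> b"

definition complete_filter :: "'c rel \<Rightarrow> 'u set \<Rightarrow> 'u set set \<Rightarrow> bool" where
  "complete_filter c X F \<equiv>
     F \<subseteq> Pow X \<and> X \<in> F \<and> {} \<notin> F \<and>
     (\<forall>A B. A \<in> F \<and> A \<subseteq> B \<and> B \<subseteq> X \<longrightarrow> B \<in> F) \<and>
     (\<forall>\<A>. \<A> \<subseteq> F \<and> \<A> \<noteq> {} \<and> ordLess2 (card_of \<A>) c \<longrightarrow> \<Inter>\<A> \<in> F)"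

definition complete_ultrafilter :: "'c rel \<Rightarrow> 'u set \<Rightarrow> 'u set set \<Rightarrow> bool" where
  "complete_ultrafilter c X U \<equiv>
     complete_filter c X U \<and> (\<forall>Y. Y \<subseteq> X \<longrightarrow> Y \<in> U \<or> X - Y \<in> U)"

definition strongly_compact :: "'c rel \<Rightarrow> 'u itself \<Rightarrow> bool" where
  "strongly_compact c (_::'u itself) \<equiv>
     Card_order c \<and> ordLess2 natLeq c \<and>
     (\<forall>(X::'u set) F. complete_filter c X F \<longrightarrow>
        (\<exists>U. F \<subseteq> U \<and> complete_ultrafilter c X U))"

text \<open>A lambda^+-system, where r represents lambda and K represents lambda^+
  (a well-order of type lambda^+).  W stands for the width tau (|W| \<le> lambda);
  the level alpha (alpha \<in> D) is T alpha \<times> {alpha}, with T alpha \<subseteq> W; the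
  relations are R i for i \<in> I.\<close>
definition nodes :: "'k set \<Rightarrow> ('k \<Rightarrow> 'w set) \<Rightarrow> ('w \<times> 'k) set" where
  "nodes D T = {(a, \<alpha>). \<alpha> \<in> D \<and> a \<in> T \<alpha>}"

definition lam_system ::
  "'l rel \<Rightarrow> 'k rel \<Rightarrow> 'w set \<Rightarrow> 'k set \<Rightarrow> ('k \<Rightarrow> 'w set) \<Rightarrow> 'i set
     \<Rightarrow> ('i \<Rightarrow> (('w \<times> 'k) \<times> ('w \<times> 'k)) set) \<Rightarrow> bool" where
  "lam_system r K W D T I R \<equiv>
     ordLeq2 (card_of W) r \<and>
     D \<subseteq> Field K \<and> (\<forall>\<alpha>\<in>Field K. \<exists>\<beta>\<in>D. ord_less K \<alpha> \<beta>) \<and>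
     (\<forall>\<alpha>\<in>D. T \<alpha> \<subseteq> W) \<and>
     ordLeq2 (card_of I) r \<and>
     (\<forall>i\<in>I. R i \<subseteq> {((a, \<alpha>), (b, \<beta>)). \<alpha> \<in> D \<and> \<beta> \<in> D \<and> ord_less K \<alpha> \<beta> \<and>
                                          a \<in> T \<alpha> \<and> b \<in> T \<beta>}) \<and>
     (\<forall>\<alpha>\<in>D. \<forall>\<beta>\<in>D. ord_less K \<alpha> \<beta> \<longrightarrow>
        (\<exists>a\<in>T \<alpha>. \<exists>b\<in>T \<beta>. \<exists>i\<in>I. ((a, \<alpha>), (b, \<beta>)) \<in> R i)) \<and>
     (\<forall>i\<in>I. \<forall>\<alpha>\<in>D. \<forall>\<beta>\<in>D. \<forall>\<gamma>\<in>D. ord_less K \<alpha> \<beta> \<and> ord_less K \<beta> \<gamma> \<longrightarrow>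
        (\<forall>a\<in>T \<alpha>. \<forall>b\<in>T \<beta>. \<forall>c\<in>T \<gamma>.
           ((a, \<alpha>), (c, \<gamma>)) \<in> R i \<and> ((b, \<beta>), (c, \<gamma>)) \<in> R i \<longrightarrow>
           ((a, \<alpha>), (b, \<beta>)) \<in> R i))"

definition strong_lam_system ::
  "'l rel \<Rightarrow> 'k rel \<Rightarrow> 'w set \<Rightarrow> 'k set \<Rightarrow> ('k \<Rightarrow> 'w set) \<Rightarrow> 'i set
     \<Rightarrow> ('i \<Rightarrow> (('w \<times> 'k) \<times> ('w \<times> 'k)) set) \<Rightarrow> bool" where
  "strong_lam_system r K W D T I R \<equiv>
     lam_system r K W D T I R \<and>
     (\<forall>\<alpha>\<in>D. \<forall>\<beta>\<in>D. ord_less K \<alpha> \<beta> \<longrightarrow>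
        (\<forall>b\<in>T \<beta>. \<exists>a\<in>T \<alpha>. \<exists>i\<in>I. ((a, \<alpha>), (b, \<beta>)) \<in> R i))"

definition is_branch ::
  "'k set \<Rightarrow> ('k \<Rightarrow> 'w set) \<Rightarrow> 'i set \<Rightarrow> ('i \<Rightarrow> (('w \<times> 'k) \<times> ('w \<times> 'k)) set)
     \<Rightarrow> ('w \<times> 'k) set \<Rightarrow> bool" where
  "is_branch D T I R B \<equiv>
     B \<subseteq> nodes D T \<and>
     (\<exists>i\<in>I. \<forall>x\<in>B. \<forall>y\<in>B. x \<noteq> y \<longrightarrow> (x, y) \<in> R i \<or> (y, x) \<in> R i)"

end

(*
  Since lambda is singular, the width W is a union of fewer than lambda pieces W_c, each of size
  less than lambda.  Fix a node b_beta on every level beta.  For a strongly compact kappa with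
  |C x I| < kappa < lambda, a kappa-complete ultrafilter on the levels containing all co-small sets
  chooses, for each level alpha, a piece W_c and a relation R_i such that for almost every beta
  above alpha some node of level alpha in W_c is R_i-below b_beta.  On lambda^+ levels with the same
  (c, i) any two levels share such a beta, and coherence relates their nodes: this is a system of
  width |W_c| < lambda with the single relation R_i.  Repeating the argument with a strongly compact
  kappa' > |W_c|, now choosing per level alpha a node a_alpha and a node e of almost every higher
  level lying R_i-above it, leaves lambda^+ levels with a common e, and coherence through e turns
  the nodes a_alpha into a branch.
*)

theory Submission
  imports Defs
begin

unbundle cardinal_syntax

lemma finite_ordLess_infinite_Field:
  assumes "Card_order r" "infinite (Field r)" "finite A"
  shows "|A| <o r"
  using finite_ordLess_infinite[OF card_of_Well_order _ _ assms(2)] assms(1,3)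
  by (simp add: card_order_on_well_order_on Field_card_of)

lemma infinite_Field_ordLess:
  assumes "\<kappa> <o r" and "infinite (Field \<kappa>)"
  shows "infinite (Field r)"
proof
  assume "finite (Field r)"
  moreover have "Well_order r" "Well_order \<kappa>"
    using ordLeq_Well_order_simp[OF ordLess_imp_ordLeq[OF assms(1)]] by auto
  ultimately have "r <o \<kappa>" using finite_ordLess_infinite assms(2) by blast
  thus False using assms(1) not_ordLess_ordLeq ordLess_imp_ordLeq by blast
qed

lemma card_of_Times_ordLess_infinite_Field:
  assumes r: "infinite (Field r)" "Card_order r" and A: "|A| <o r" and B: "|B| <o r"
  shows "|A \<times> B| <o r"
proof -
  let ?S = "A <+> B"
  have S: "|?S| <o r" using card_of_Plus_ordLess_infinite_Field[OF r A B] .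
  have "|A \<times> B| \<le>o |?S \<times> ?S|"
    by (rule ordLeq_transitive[OF card_of_Times_mono1[OF card_of_Plus1]
          card_of_Times_mono2[OF card_of_Plus2]])
  have "|?S \<times> ?S| <o r"
  proof (cases "finite ?S")
    case True
    thus ?thesis by (simp add: finite_ordLess_infinite_Field r)
  next
    case False
    thus ?thesis by (rule ordIso_ordLess_trans[OF card_of_Times_same_infinite S])
  qed
  with \<open>|A \<times> B| \<le>o |?S \<times> ?S|\<close> show ?thesis by (rule ordLeq_ordLess_trans)
qed

lemma pigeonhole_not_ordLeq:
  assumes r: "Card_order r" "infinite (Field r)" and A: "\<not> |A| \<le>o r"
    and cover: "A \<subseteq> (\<Union>l\<in>L. P l)" and L: "|L| \<le>o r"
  shows "\<exists>l\<in>L. \<not> |A \<inter> P l| \<le>o r"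
proof (rule ccontr)
  assume "\<not> ?thesis"
  hence "\<forall>l\<in>L. |A \<inter> P l| \<le>o r" by blast
  hence "|\<Union>l\<in>L. A \<inter> P l| \<le>o r"
    using card_of_UNION_ordLeq_infinite_Field[OF r(2,1) L, of "\<lambda>l. A \<inter> P l"] by blast
  moreover have "A = (\<Union>l\<in>L. A \<inter> P l)" using cover by blast
  ultimately show False using A by simp
qed

lemma ord_less_total:
  assumes K: "Card_order K" and "a \<in> Field K" "b \<in> Field K" "a \<noteq> b"
  shows "ord_less K a b \<or> ord_less K b a"
proof -
  have "total_on (Field K) K"
    using K unfolding card_order_on_def well_order_on_def linear_order_on_def by blast
  thus ?thesis using assms(2-4) unfolding total_on_def ord_less_def by blast
qed

lemma ord_less_asym:
  assumes K: "Card_order K" and "ord_less K a b" shows "\<not> ord_less K b a"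
proof -
  have "antisym K"
    using K unfolding card_order_on_def well_order_on_def linear_order_on_def partial_order_on_def
    by blast
  thus ?thesis using assms(2) unfolding antisym_def ord_less_def by blast
qed

lemma card_of_not_above_cardSuc:
  assumes r: "Card_order r" "infinite (Field r)" and K: "Card_order K" "K =o cardSuc r"
    and \<beta>: "\<beta> \<in> Field K"
  shows "|{\<gamma>\<in>Field K. \<not> ord_less K \<beta> \<gamma>}| \<le>o r"
proof -
  have "|underS K \<beta>| <o cardSuc r"
    using card_of_underS[OF K(1) \<beta>] K(2) ordLess_ordIso_trans by blast
  hence "|underS K \<beta>| \<le>o r" using cardSuc_ordLeq_ordLess[OF r(1) card_of_Card_order] by blast
  moreover have "|{\<beta>}| \<le>o r"
    by (rule ordLess_imp_ordLeq[OF finite_ordLess_infinite_Field[OF r]]) simp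
  ultimately have "|underS K \<beta> \<union> {\<beta>}| \<le>o r"
    using card_of_Un_ordLeq_infinite_Field[OF r(2) _ _ r(1)] by blast
  moreover have "{\<gamma>\<in>Field K. \<not> ord_less K \<beta> \<gamma>} \<subseteq> underS K \<beta> \<union> {\<beta>}"
    using ord_less_total[OF K(1) _ \<beta>] unfolding underS_def ord_less_def by blast
  ultimately show ?thesis using card_of_mono1 ordLeq_transitive by blast
qed

lemma unbounded_not_ordLeq:
  assumes r: "Card_order r" "infinite (Field r)" and K: "Card_order K" "K =o cardSuc r"
    and D: "D \<subseteq> Field K" and unbounded: "\<forall>\<alpha>\<in>Field K. \<exists>\<beta>\<in>D. ord_less K \<alpha> \<beta>"
  shows "\<not> |D| \<le>o r"
proof
  assume "|D| \<le>o r"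
  moreover have "\<forall>\<delta>\<in>D. |{\<gamma>\<in>Field K. \<not> ord_less K \<delta> \<gamma>}| \<le>o r"
    using card_of_not_above_cardSuc[OF r K] D by blast
  ultimately have "|\<Union>\<delta>\<in>D. {\<gamma>\<in>Field K. \<not> ord_less K \<delta> \<gamma>}| \<le>o r"
    by (rule card_of_UNION_ordLeq_infinite_Field[OF r(2,1)])
  moreover have "Field K \<subseteq> (\<Union>\<delta>\<in>D. {\<gamma>\<in>Field K. \<not> ord_less K \<delta> \<gamma>})"
    using unbounded ord_less_asym[OF K(1)] by blast
  ultimately have "|Field K| \<le>o r" using card_of_mono1 ordLeq_transitive by blast
  hence "cardSuc r \<le>o r"
    using card_of_Field_ordIso[OF K(1)] K(2) ordIso_ordLeq_trans ordIso_symmetric ordIso_transitive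
    by metis
  thus False using cardSuc_greater[OF r(1)] not_ordLess_ordLeq by blast
qed

lemma card_of_ordIso_cardSuc:
  assumes r: "Card_order r" and K: "Card_order K" "K =o cardSuc r"
    and B: "\<not> |B| \<le>o r" and BK: "|B| \<le>o |Field K|"
  shows "|B| =o K"
proof -
  have "cardSuc r \<le>o |B|"
    using B cardSuc_ordLeq_ordLess[OF r card_of_Card_order] card_of_Well_order
      cardSuc_Well_order[OF r] not_ordLess_iff_ordLeq by blast
  hence "K \<le>o |B|" using K(2) ordIso_ordLeq_trans by blast
  moreover have "|B| \<le>o K" using BK card_of_Field_ordIso[OF K(1)] ordLeq_ordIso_trans by blast
  ultimately show ?thesis using ordIso_iff_ordLeq by blast
qed

lemma singular_cover_by_small_sets:
  fixes r :: "'a rel" and W :: "'w set"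
  assumes r: "Card_order r" and singular: "\<not> regularCard r" and W: "|W| \<le>o r"
  obtains C :: "'a set" and Wc :: "'a \<Rightarrow> 'w set"
  where "|C| <o r" and "\<forall>c\<in>C. |Wc c| <o r" and "W \<subseteq> (\<Union>c\<in>C. Wc c)"
proof -
  obtain C where C: "C \<subseteq> Field r" "cofinal C r" "\<not> |C| =o r"
    using singular unfolding regularCard_def by blast
  have "|C| \<le>o r"
    by (rule ordLeq_ordIso_trans[OF card_of_mono1[OF C(1)] card_of_Field_ordIso[OF r]])
  hence "|C| <o r" using C(3) ordLeq_iff_ordLess_or_ordIso by blast
  have "|W| \<le>o |Field r|"
    by (rule ordLeq_ordIso_trans[OF W ordIso_symmetric[OF card_of_Field_ordIso[OF r]]])
  then obtain g where g: "inj_on g W" "g ` W \<subseteq> Field r"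
    unfolding card_of_ordLeq[symmetric] by blast
  define Wc where "Wc c = {w\<in>W. g w \<in> underS r c}" for c
  have "|Wc c| <o r" if "c \<in> C" for c
  proof -
    have "inj_on g (Wc c)" "g ` Wc c \<subseteq> underS r c"
      using g(1) unfolding Wc_def inj_on_def by auto
    hence "|Wc c| \<le>o |underS r c|" unfolding card_of_ordLeq[symmetric] by blast
    moreover have "|underS r c| <o r" using card_of_underS[OF r] that C(1) by blast
    ultimately show ?thesis by (rule ordLeq_ordLess_trans)
  qed
  moreover have "W \<subseteq> (\<Union>c\<in>C. Wc c)"
    using g(2) C(2) unfolding cofinal_def Wc_def underS_def by blast
  ultimately show ?thesis using that[of C Wc] \<open>|C| <o r\<close> by blast
qed

lemma complete_filterD:
  assumes "complete_filter \<kappa> X F"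
  shows "\<And>A. A \<in> F \<Longrightarrow> A \<subseteq> X" and "X \<in> F" and "{} \<notin> F"
    and "\<And>A B. A \<in> F \<Longrightarrow> A \<subseteq> B \<Longrightarrow> B \<subseteq> X \<Longrightarrow> B \<in> F"
    and "\<And>\<A>. \<A> \<subseteq> F \<Longrightarrow> \<A> \<noteq> {} \<Longrightarrow> |\<A>| <o \<kappa> \<Longrightarrow> \<Inter>\<A> \<in> F"
  using assms unfolding complete_filter_def by auto

lemma complete_ultrafilterD:
  assumes "complete_ultrafilter \<kappa> X U"
  shows "complete_filter \<kappa> X U" and "\<And>Y. Y \<subseteq> X \<Longrightarrow> Y \<notin> U \<Longrightarrow> X - Y \<in> U"
  using assms unfolding complete_ultrafilter_def by auto

lemma complete_filter_Int:
  assumes F: "complete_filter \<kappa> X F" and \<kappa>: "Card_order \<kappa>" "infinite (Field \<kappa>)"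
    and "A \<in> F" "B \<in> F"
  shows "A \<inter> B \<in> F"
proof -
  have "|{A, B}| <o \<kappa>" by (rule finite_ordLess_infinite_Field[OF \<kappa>]) simp
  moreover have "{A, B} \<subseteq> F" using assms(4,5) by simp
  ultimately have "\<Inter>{A, B} \<in> F" by (intro complete_filterD(5)[OF F]) simp_all
  thus ?thesis by simp
qed

lemma complete_ultrafilter_pigeonhole:
  assumes U: "complete_ultrafilter \<kappa> X U" and \<kappa>: "Card_order \<kappa>" "infinite (Field \<kappa>)"
    and A: "A \<in> U" and cover: "A \<subseteq> (\<Union>l\<in>L. P l)" and L: "|L| <o \<kappa>"
  shows "\<exists>l\<in>L. A \<inter> P l \<in> U"
proof (rule ccontr)
  assume none: "\<not> ?thesis"
  note F = complete_ultrafilterD(1)[OF U]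
  let ?\<A> = "(\<lambda>l. X - A \<inter> P l) ` L"
  have "?\<A> \<subseteq> U" using none complete_ultrafilterD(2)[OF U] complete_filterD(1)[OF F A] by blast
  moreover have "?\<A> \<noteq> {}"
  proof -
    have "A \<noteq> {}" using A complete_filterD(3)[OF F] by auto
    thus ?thesis using cover by auto
  qed
  moreover have "|?\<A>| <o \<kappa>" by (rule ordLeq_ordLess_trans[OF card_of_image L])
  ultimately have "\<Inter>?\<A> \<in> U" by (rule complete_filterD(5)[OF F])
  hence "A \<inter> \<Inter>?\<A> \<in> U" by (rule complete_filter_Int[OF F \<kappa> A])
  moreover have "A \<inter> \<Inter>?\<A> = {}" using cover by blast
  ultimately show False using complete_filterD(3)[OF F] by simp
qed

lemma complete_filter_image:
  assumes f: "inj_on f X" and F: "complete_filter \<kappa> X F"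
  shows "complete_filter \<kappa> (f ` X) (image f ` F)"
  unfolding complete_filter_def
proof (intro conjI allI impI)
  note FX = complete_filterD(1)[OF F]
  show "image f ` F \<subseteq> Pow (f ` X)" using FX by blast
  show "f ` X \<in> image f ` F" using complete_filterD(2)[OF F] by blast
  show "{} \<notin> image f ` F" using complete_filterD(3)[OF F] by auto
  fix A B assume "A \<in> image f ` F \<and> A \<subseteq> B \<and> B \<subseteq> f ` X"
  then obtain A0 where "A0 \<in> F" "f ` A0 \<subseteq> B" "B \<subseteq> f ` X" by blast
  moreover have "A0 \<subseteq> X \<inter> f -` B" using FX \<open>A0 \<in> F\<close> \<open>f ` A0 \<subseteq> B\<close> by blast
  ultimately have "X \<inter> f -` B \<in> F" using complete_filterD(4)[OF F] by blast
  moreover have "B = f ` (X \<inter> f -` B)" using \<open>B \<subseteq> f ` X\<close> by blast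
  ultimately show "B \<in> image f ` F" by blast
next
  fix \<A> assume \<A>: "\<A> \<subseteq> image f ` F \<and> \<A> \<noteq> {} \<and> |\<A>| <o \<kappa>"
  note FX = complete_filterD(1)[OF F]
  let ?\<A>0 = "(\<lambda>B. X \<inter> f -` B) ` \<A>"
  have "?\<A>0 \<subseteq> F"
  proof
    fix A assume "A \<in> ?\<A>0"
    then obtain A0 where "A0 \<in> F" "A = X \<inter> f -` f ` A0" using \<A> by blast
    moreover have "X \<inter> f -` f ` A0 = A0"
      using FX[OF \<open>A0 \<in> F\<close>] f unfolding inj_on_def by blast
    ultimately show "A \<in> F" by simp
  qed
  moreover have "?\<A>0 \<noteq> {}" using \<A> by blast
  moreover have "|?\<A>0| <o \<kappa>"
    by (rule ordLeq_ordLess_trans[OF card_of_image]) (use \<A> in simp)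
  ultimately have "\<Inter>?\<A>0 \<in> F" by (rule complete_filterD(5)[OF F])
  moreover have "\<Inter>\<A> = f ` \<Inter>?\<A>0"
  proof -
    obtain B0 where "B0 \<in> \<A>" using \<A> by blast
    have "f ` (X \<inter> f -` B) = B" if "B \<in> \<A>" for B
      using that \<A> FX by blast
    hence "\<Inter>\<A> = (\<Inter>B\<in>\<A>. f ` (X \<inter> f -` B))" by simp
    also have "\<dots> = f ` \<Inter>?\<A>0"
      by (rule image_INT[OF f _ \<open>B0 \<in> \<A>\<close>, symmetric]) blast
    finally show ?thesis .
  qed
  ultimately show "\<Inter>\<A> \<in> image f ` F" by blast
qed

lemma complete_ultrafilter_vimage:
  assumes f: "inj_on f X" and U: "complete_ultrafilter \<kappa> (f ` X) U"
  shows "complete_ultrafilter \<kappa> X {A. A \<subseteq> X \<and> f ` A \<in> U}" (is "complete_ultrafilter \<kappa> X ?V")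
  unfolding complete_ultrafilter_def complete_filter_def
proof (intro conjI allI impI)
  note F = complete_ultrafilterD(1)[OF U]
  show "?V \<subseteq> Pow X" "X \<in> ?V" using complete_filterD(2)[OF F] by auto
  show "{} \<notin> ?V" using complete_filterD(3)[OF F] by simp
  fix Y assume "Y \<subseteq> X"
  moreover have "f ` X - f ` Y = f ` (X - Y)" using f \<open>Y \<subseteq> X\<close> by (simp add: inj_on_image_set_diff)
  ultimately show "Y \<in> ?V \<or> X - Y \<in> ?V"
    using complete_ultrafilterD(2)[OF U, of "f ` Y"] by auto
next
  note F = complete_ultrafilterD(1)[OF U]
  fix A B assume "A \<in> ?V \<and> A \<subseteq> B \<and> B \<subseteq> X"
  thus "B \<in> ?V" using complete_filterD(4)[OF F, of "f ` A" "f ` B"] by auto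
next
  note F = complete_ultrafilterD(1)[OF U]
  fix \<A> assume \<A>: "\<A> \<subseteq> ?V \<and> \<A> \<noteq> {} \<and> |\<A>| <o \<kappa>"
  then obtain A0 where "A0 \<in> \<A>" by blast
  have "image f ` \<A> \<subseteq> U" using \<A> by blast
  moreover have "image f ` \<A> \<noteq> {}" using \<A> by blast
  moreover have "|image f ` \<A>| <o \<kappa>"
    by (rule ordLeq_ordLess_trans[OF card_of_image]) (use \<A> in simp)
  ultimately have "\<Inter>(image f ` \<A>) \<in> U" by (rule complete_filterD(5)[OF F])
  moreover have "f ` \<Inter>((\<lambda>A. A) ` \<A>) = (\<Inter>A\<in>\<A>. f ` A)"
    by (rule image_INT[OF f _ \<open>A0 \<in> \<A>\<close>]) (use \<A> in blast)
  moreover have "\<Inter>\<A> \<subseteq> X" using \<A> \<open>A0 \<in> \<A>\<close> by blast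
  ultimately show "\<Inter>\<A> \<in> ?V" by simp
qed

lemma complete_filter_co_small:
  assumes r: "Card_order r" "infinite (Field r)" and \<kappa>: "\<kappa> \<le>o r" and X: "\<not> |X| \<le>o r"
  shows "complete_filter \<kappa> X {A. A \<subseteq> X \<and> |X - A| \<le>o r}"
  unfolding complete_filter_def
proof (intro conjI allI impI)
  show "{A. A \<subseteq> X \<and> |X - A| \<le>o r} \<subseteq> Pow X" by blast
  show "X \<in> {A. A \<subseteq> X \<and> |X - A| \<le>o r}" using card_of_empty1[of r] r(1) by simp
  show "{} \<notin> {A. A \<subseteq> X \<and> |X - A| \<le>o r}" using X by simp
next
  fix A B assume "A \<in> {A. A \<subseteq> X \<and> |X - A| \<le>o r} \<and> A \<subseteq> B \<and> B \<subseteq> X"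
  moreover have "|X - B| \<le>o |X - A|" if "A \<subseteq> B" by (rule card_of_mono1) (use that in blast)
  ultimately show "B \<in> {A. A \<subseteq> X \<and> |X - A| \<le>o r}" using ordLeq_transitive by blast
next
  fix \<A> assume \<A>: "\<A> \<subseteq> {A. A \<subseteq> X \<and> |X - A| \<le>o r} \<and> \<A> \<noteq> {} \<and> |\<A>| <o \<kappa>"
  have "|\<A>| \<le>o r" using \<A> ordLess_ordLeq_trans[OF _ \<kappa>] ordLess_imp_ordLeq by blast
  moreover have "\<forall>A\<in>\<A>. |X - A| \<le>o r" using \<A> by blast
  ultimately have "|\<Union>A\<in>\<A>. X - A| \<le>o r" by (rule card_of_UNION_ordLeq_infinite_Field[OF r(2,1)])
  moreover have "(\<Union>A\<in>\<A>. X - A) = X - \<Inter>\<A>" using \<A> by blast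
  moreover have "\<Inter>\<A> \<subseteq> X" using \<A> by blast
  ultimately show "\<Inter>\<A> \<in> {A. A \<subseteq> X \<and> |X - A| \<le>o r}" by simp
qed

lemma strongly_compact_infinite:
  assumes "strongly_compact \<kappa> TYPE('u)"
  shows "Card_order \<kappa>" and "infinite (Field \<kappa>)"
  using assms infinite_Field_ordLess[of natLeq \<kappa>] unfolding strongly_compact_def
  by (auto simp: Field_natLeq)

lemma strongly_compact_extend:
  fixes X :: "'u set"
  assumes "strongly_compact \<kappa> TYPE('u)" and "complete_filter \<kappa> X F"
  obtains U where "F \<subseteq> U" and "complete_ultrafilter \<kappa> X U"
  using assms unfolding strongly_compact_def by blast

lemma strongly_compact_inj:
  fixes f :: "'a \<Rightarrow> 'b"
  assumes f: "inj f" and \<kappa>: "strongly_compact \<kappa> TYPE('b)"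
  shows "strongly_compact \<kappa> TYPE('a)"
  unfolding strongly_compact_def
proof (intro conjI allI impI)
  show "Card_order \<kappa>" "natLeq <o \<kappa>" using \<kappa> unfolding strongly_compact_def by auto
  fix X :: "'a set" and F assume F: "complete_filter \<kappa> X F"
  have fX: "inj_on f X" using f by (rule inj_on_subset) simp
  obtain U where FU: "image f ` F \<subseteq> U" and U: "complete_ultrafilter \<kappa> (f ` X) U"
    by (rule strongly_compact_extend[OF \<kappa> complete_filter_image[OF fX F]])
  have "F \<subseteq> {A. A \<subseteq> X \<and> f ` A \<in> U}" using complete_filterD(1)[OF F] FU by blast
  with complete_ultrafilter_vimage[OF fX U] show "\<exists>V. F \<subseteq> V \<and> complete_ultrafilter \<kappa> X V"
    by blast
qed

lemma uniform_complete_ultrafilter_exists: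
  fixes X :: "'k set"
  assumes r: "Card_order r" "infinite (Field r)"
    and \<kappa>: "strongly_compact \<kappa> TYPE('k set)" "\<kappa> <o r" and X: "\<not> |X| \<le>o r"
  obtains U where "complete_ultrafilter \<kappa> X U" and "\<And>A. A \<subseteq> X \<Longrightarrow> |X - A| \<le>o r \<Longrightarrow> A \<in> U"
proof -
  (* Strong compactness is only assumed for filters on sets of type 'k set;
     it transfers to 'k along the embedding x \<mapsto> {x}. *)
  have "strongly_compact \<kappa> TYPE('k)"
    by (rule strongly_compact_inj[of "\<lambda>x. {x}"]) (use \<kappa>(1) in \<open>auto simp: inj_def\<close>)
  moreover have "complete_filter \<kappa> X {A. A \<subseteq> X \<and> |X - A| \<le>o r}"
    by (rule complete_filter_co_small[OF r ordLess_imp_ordLeq[OF \<kappa>(2)] X])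
  ultimately obtain U where "{A. A \<subseteq> X \<and> |X - A| \<le>o r} \<subseteq> U" "complete_ultrafilter \<kappa> X U"
    by (rule strongly_compact_extend)
  thus ?thesis using that by blast
qed

lemma strongly_compact_above:
  fixes r :: "'l rel" and A :: "'a set"
  assumes r: "Card_order r"
    and limit: "\<forall>\<mu>::'l rel. Card_order \<mu> \<and> \<mu> <o r \<longrightarrow>
           (\<exists>\<kappa>::'l rel. \<mu> <o \<kappa> \<and> \<kappa> <o r \<and> strongly_compact \<kappa> TYPE('u))"
    and A: "|A| <o r"
  obtains \<kappa> :: "'l rel" where "|A| <o \<kappa>" "\<kappa> <o r" "strongly_compact \<kappa> TYPE('u)"
proof -
  have "|A| \<le>o |Field r|"
    by (rule ordLeq_ordIso_trans[OF ordLess_imp_ordLeq[OF A]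
          ordIso_symmetric[OF card_of_Field_ordIso[OF r]]])
  then obtain h where h: "inj_on h A" "h ` A \<subseteq> Field r"
    unfolding card_of_ordLeq[symmetric] by blast
  have iso: "|A| =o |h ` A|" using h(1) card_of_ordIso bij_betw_imageI by blast
  hence "|h ` A| <o r" using A ordIso_ordLess_trans ordIso_symmetric by blast
  then obtain \<kappa> :: "'l rel" where "|h ` A| <o \<kappa>" "\<kappa> <o r" "strongly_compact \<kappa> TYPE('u)"
    using limit card_of_Card_order by blast
  moreover from iso this(1) have "|A| <o \<kappa>" by (rule ordIso_ordLess_trans)
  ultimately show ?thesis using that by blast
qed

lemma infinite_Field_if_limit_of_strongly_compact:
  fixes r :: "'l rel"
  assumes r: "Card_order r" and singular: "\<not> regularCard r"
    and limit: "\<forall>\<mu>::'l rel. Card_order \<mu> \<and> \<mu> <o r \<longrightarrow>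
           (\<exists>\<kappa>::'l rel. \<mu> <o \<kappa> \<and> \<kappa> <o r \<and> strongly_compact \<kappa> TYPE('u))"
  shows "infinite (Field r)"
proof (cases "Field r = {}")
  case True
  hence "regularCard r" unfolding regularCard_def cofinal_def
    using r card_of_Field_ordIso by fastforce
  thus ?thesis using singular by blast
next
  case False
  have "\<not> r \<le>o |{}::'l set|"
  proof
    assume "r \<le>o |{}::'l set|"
    hence "|Field r| \<le>o |{}::'l set|" by (rule ordIso_ordLeq_trans[OF card_of_Field_ordIso[OF r]])
    thus False using False card_of_empty3 by blast
  qed
  hence "|{}::'l set| <o r"
    by (simp add: not_ordLeq_iff_ordLess[OF card_of_Well_order] r card_order_on_well_order_on)
  then obtain \<kappa> :: "'l rel" where "\<kappa> <o r" "strongly_compact \<kappa> TYPE('u)"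
    by (rule strongly_compact_above[OF r limit])
  thus ?thesis using strongly_compact_infinite(2) infinite_Field_ordLess by blast
qed

lemma uniform_ultrafilter_thinning:
  fixes r :: "'l rel" and K :: "'k rel" and \<kappa> :: "'l rel" and Par :: "'p set" and \<pi> :: "'p \<Rightarrow> 'y"
  assumes r: "Card_order r" "infinite (Field r)"
    and K: "Card_order K" "K =o cardSuc r"
    and \<kappa>: "strongly_compact \<kappa> TYPE('k set)" "\<kappa> <o r"
    and D: "D \<subseteq> Field K" "\<not> |D| \<le>o r"
    and Par: "|Par| <o \<kappa>"
    and cover: "\<And>\<alpha> \<beta>. \<alpha> \<in> D \<Longrightarrow> \<beta> \<in> D \<Longrightarrow> ord_less K \<alpha> \<beta> \<Longrightarrow> \<exists>p\<in>Par. \<Phi> \<alpha> p \<beta>"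
  obtains D' :: "'k set" and g :: "'k \<Rightarrow> 'p" and y :: 'y
  where "D' \<subseteq> D" and "\<not> |D'| \<le>o r" and "y \<in> \<pi> ` Par"
    and "\<forall>\<alpha>\<in>D'. \<pi> (g \<alpha>) = y"
    and "\<forall>\<alpha>\<in>D'. \<forall>\<alpha>'\<in>D'. \<exists>\<beta>\<in>D. ord_less K \<alpha> \<beta> \<and> ord_less K \<alpha>' \<beta> \<and>
           \<Phi> \<alpha> (g \<alpha>) \<beta> \<and> \<Phi> \<alpha>' (g \<alpha>') \<beta>"
proof -
  note \<kappa>_infinite = strongly_compact_infinite[OF \<kappa>(1)]
  obtain U where U: "complete_ultrafilter \<kappa> D U"
    and co_small: "\<And>A. A \<subseteq> D \<Longrightarrow> |D - A| \<le>o r \<Longrightarrow> A \<in> U"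
    using uniform_complete_ultrafilter_exists[OF r \<kappa> D(2)] by blast
  note F = complete_ultrafilterD(1)[OF U]
  define above where "above \<alpha> = {\<beta>\<in>D. ord_less K \<alpha> \<beta>}" for \<alpha>
  have above_in_U: "above \<alpha> \<in> U" if "\<alpha> \<in> D" for \<alpha>
  proof (rule co_small)
    have "D - above \<alpha> \<subseteq> {\<gamma>\<in>Field K. \<not> ord_less K \<alpha> \<gamma>}" using D(1) unfolding above_def by blast
    moreover have "|{\<gamma>\<in>Field K. \<not> ord_less K \<alpha> \<gamma>}| \<le>o r"
      using card_of_not_above_cardSuc[OF r K] that D(1) by blast
    ultimately show "|D - above \<alpha>| \<le>o r" by (rule ordLeq_transitive[OF card_of_mono1])
  qed (auto simp: above_def)
  have "\<exists>p\<in>Par. above \<alpha> \<inter> {\<beta>. \<Phi> \<alpha> p \<beta>} \<in> U" if "\<alpha> \<in> D" for \<alpha>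
    by (rule complete_ultrafilter_pigeonhole[OF U \<kappa>_infinite above_in_U[OF that] _ Par])
      (use cover that in \<open>auto simp: above_def\<close>)
  then obtain g where g: "\<forall>\<alpha>\<in>D. g \<alpha> \<in> Par \<and> above \<alpha> \<inter> {\<beta>. \<Phi> \<alpha> (g \<alpha>) \<beta>} \<in> U"
    by metis
  have "|\<pi> ` Par| \<le>o r"
    using ordLeq_ordLess_trans[OF card_of_image Par] \<kappa>(2) ordLess_transitive ordLess_imp_ordLeq
    by blast
  moreover have "D \<subseteq> (\<Union>y\<in>\<pi> ` Par. {\<alpha>. \<pi> (g \<alpha>) = y})" using g by blast
  ultimately obtain y where y: "y \<in> \<pi> ` Par" and large: "\<not> |D \<inter> {\<alpha>. \<pi> (g \<alpha>) = y}| \<le>o r"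
    using pigeonhole_not_ordLeq[OF r D(2)] by blast
  define D' where "D' = D \<inter> {\<alpha>. \<pi> (g \<alpha>) = y}"
  have "\<exists>\<beta>\<in>D. ord_less K \<alpha> \<beta> \<and> ord_less K \<alpha>' \<beta> \<and> \<Phi> \<alpha> (g \<alpha>) \<beta> \<and> \<Phi> \<alpha>' (g \<alpha>') \<beta>"
    if "\<alpha> \<in> D'" "\<alpha>' \<in> D'" for \<alpha> \<alpha>'
  proof -
    have "(above \<alpha> \<inter> {\<beta>. \<Phi> \<alpha> (g \<alpha>) \<beta>}) \<inter> (above \<alpha>' \<inter> {\<beta>. \<Phi> \<alpha>' (g \<alpha>') \<beta>}) \<in> U"
      using complete_filter_Int[OF F \<kappa>_infinite] g that unfolding D'_def by blast
    hence "(above \<alpha> \<inter> {\<beta>. \<Phi> \<alpha> (g \<alpha>) \<beta>}) \<inter> (above \<alpha>' \<inter> {\<beta>. \<Phi> \<alpha>' (g \<alpha>') \<beta>}) \<noteq> {}"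
      using complete_filterD(3)[OF F] by auto
    thus ?thesis unfolding above_def by blast
  qed
  moreover have "\<forall>\<alpha>\<in>D'. \<pi> (g \<alpha>) = y" unfolding D'_def by blast
  ultimately show ?thesis using that[of D' y g] y large unfolding D'_def by blast
qed

lemma strong_lam_systemD:
  assumes "strong_lam_system r K W D T I R"
  shows "ordLeq2 (card_of W) r" and "D \<subseteq> Field K" and "\<forall>\<alpha>\<in>Field K. \<exists>\<beta>\<in>D. ord_less K \<alpha> \<beta>"
    and "\<forall>\<alpha>\<in>D. T \<alpha> \<subseteq> W"
    and "\<forall>\<alpha>\<in>D. \<forall>\<beta>\<in>D. ord_less K \<alpha> \<beta> \<longrightarrow>
        (\<exists>a\<in>T \<alpha>. \<exists>b\<in>T \<beta>. \<exists>i\<in>I. ((a, \<alpha>), (b, \<beta>)) \<in> R i)"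
    and "\<forall>i\<in>I. \<forall>\<alpha>\<in>D. \<forall>\<beta>\<in>D. \<forall>\<gamma>\<in>D. ord_less K \<alpha> \<beta> \<and> ord_less K \<beta> \<gamma> \<longrightarrow>
        (\<forall>a\<in>T \<alpha>. \<forall>b\<in>T \<beta>. \<forall>c\<in>T \<gamma>.
           ((a, \<alpha>), (c, \<gamma>)) \<in> R i \<and> ((b, \<beta>), (c, \<gamma>)) \<in> R i \<longrightarrow> ((a, \<alpha>), (b, \<beta>)) \<in> R i)"
    and "\<forall>\<alpha>\<in>D. \<forall>\<beta>\<in>D. ord_less K \<alpha> \<beta> \<longrightarrow>
        (\<forall>b\<in>T \<beta>. \<exists>a\<in>T \<alpha>. \<exists>i\<in>I. ((a, \<alpha>), (b, \<beta>)) \<in> R i)"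
  using assms unfolding strong_lam_system_def lam_system_def by simp_all

lemma strong_system_narrow_subsystem:
  fixes r :: "'l rel" and K :: "'k rel" and \<kappa> :: "'l rel" and W :: "'w set"
    and C :: "'c set" and Wc :: "'c \<Rightarrow> 'w set" and I :: "'i set"
    and R :: "'i \<Rightarrow> (('w \<times> 'k) \<times> ('w \<times> 'k)) set"
  assumes r: "Card_order r" "infinite (Field r)"
    and K: "Card_order K" "K =o cardSuc r"
    and sys: "strong_lam_system r K W D T I R"
    and W: "W \<subseteq> (\<Union>c\<in>C. Wc c)"
    and \<kappa>: "strongly_compact \<kappa> TYPE('k set)" "\<kappa> <o r" "|C \<times> I| <o \<kappa>"
  obtains i c D1 where "i \<in> I" and "c \<in> C" and "D1 \<subseteq> D" and "\<not> |D1| \<le>o r"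
    and "\<forall>\<alpha>\<in>D1. \<forall>\<alpha>'\<in>D1. ord_less K \<alpha> \<alpha>' \<longrightarrow>
           (\<exists>a\<in>T \<alpha> \<inter> Wc c. \<exists>a'\<in>T \<alpha>' \<inter> Wc c. ((a, \<alpha>), (a', \<alpha>')) \<in> R i)"
proof -
  note DK = strong_lam_systemD(2)[OF sys] and unbounded = strong_lam_systemD(3)[OF sys]
    and TW = strong_lam_systemD(4)[OF sys] and linked = strong_lam_systemD(5)[OF sys]
    and coherent = strong_lam_systemD(6)[OF sys] and strong = strong_lam_systemD(7)[OF sys]
  have "\<forall>\<beta>\<in>D. \<exists>x. x \<in> T \<beta>"
  proof
    fix \<beta> assume "\<beta> \<in> D"
    then obtain \<gamma> where "\<gamma> \<in> D" "ord_less K \<beta> \<gamma>" using unbounded DK by blast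
    thus "\<exists>x. x \<in> T \<beta>" using linked \<open>\<beta> \<in> D\<close> by blast
  qed
  then obtain b where b: "\<forall>\<beta>\<in>D. b \<beta> \<in> T \<beta>" by (rule bchoice[THEN exE])
  have "\<exists>p\<in>C \<times> I. \<exists>a\<in>T \<alpha> \<inter> Wc (fst p). ((a, \<alpha>), (b \<beta>, \<beta>)) \<in> R (snd p)"
    if \<alpha>\<beta>: "\<alpha> \<in> D" "\<beta> \<in> D" "ord_less K \<alpha> \<beta>" for \<alpha> \<beta>
  proof -
    obtain a i where "a \<in> T \<alpha>" "i \<in> I" "((a, \<alpha>), (b \<beta>, \<beta>)) \<in> R i"
      using strong b \<alpha>\<beta> by blast
    moreover obtain c where "c \<in> C" "a \<in> Wc c" using W TW \<alpha>\<beta>(1) \<open>a \<in> T \<alpha>\<close> by blast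
    ultimately show ?thesis by (intro bexI[of _ "(c, i)"]) auto
  qed
  with \<kappa>(3) obtain D1 :: "'k set" and g :: "'k \<Rightarrow> 'c \<times> 'i" and p :: "'c \<times> 'i"
    where D1: "D1 \<subseteq> D" "\<not> |D1| \<le>o r" and p: "p \<in> id ` (C \<times> I)"
    and g: "\<forall>\<alpha>\<in>D1. id (g \<alpha>) = p"
    and common: "\<forall>\<alpha>\<in>D1. \<forall>\<alpha>'\<in>D1. \<exists>\<beta>\<in>D. ord_less K \<alpha> \<beta> \<and> ord_less K \<alpha>' \<beta> \<and>
           (\<exists>a\<in>T \<alpha> \<inter> Wc (fst (g \<alpha>)). ((a, \<alpha>), (b \<beta>, \<beta>)) \<in> R (snd (g \<alpha>))) \<and>
           (\<exists>a\<in>T \<alpha>' \<inter> Wc (fst (g \<alpha>')). ((a, \<alpha>'), (b \<beta>, \<beta>)) \<in> R (snd (g \<alpha>')))"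
    by (rule uniform_ultrafilter_thinning[OF r K \<kappa>(1,2) DK unbounded_not_ordLeq[OF r K DK unbounded],
          where \<pi> = id and
          \<Phi> = "\<lambda>\<alpha> p \<beta>. \<exists>a\<in>T \<alpha> \<inter> Wc (fst p). ((a, \<alpha>), (b \<beta>, \<beta>)) \<in> R (snd p)"])
  show ?thesis
  proof (rule that[of "snd p" "fst p" D1])
    show "snd p \<in> I" "fst p \<in> C" using p by auto
    show "\<forall>\<alpha>\<in>D1. \<forall>\<alpha>'\<in>D1. ord_less K \<alpha> \<alpha>' \<longrightarrow>
        (\<exists>a\<in>T \<alpha> \<inter> Wc (fst p). \<exists>a'\<in>T \<alpha>' \<inter> Wc (fst p). ((a, \<alpha>), (a', \<alpha>')) \<in> R (snd p))"
    proof (intro ballI impI)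
      fix \<alpha> \<alpha>' assume \<alpha>: "\<alpha> \<in> D1" "\<alpha>' \<in> D1" "ord_less K \<alpha> \<alpha>'"
      then obtain \<beta> a a' where \<beta>: "\<beta> \<in> D" "ord_less K \<alpha>' \<beta>"
        and a: "a \<in> T \<alpha> \<inter> Wc (fst p)" "((a, \<alpha>), (b \<beta>, \<beta>)) \<in> R (snd p)"
        and a': "a' \<in> T \<alpha>' \<inter> Wc (fst p)" "((a', \<alpha>'), (b \<beta>, \<beta>)) \<in> R (snd p)"
        using common g by (metis id_apply)
      have "((a, \<alpha>), (a', \<alpha>')) \<in> R (snd p)"
        using coherent \<open>snd p \<in> I\<close> \<alpha> D1(1) \<beta> a a' b by blast
      thus "\<exists>a\<in>T \<alpha> \<inter> Wc (fst p). \<exists>a'\<in>T \<alpha>' \<inter> Wc (fst p). ((a, \<alpha>), (a', \<alpha>')) \<in> R (snd p)"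
        using a(1) a'(1) by blast
    qed
  qed (use D1 in auto)
qed

lemma narrow_system_chain:
  fixes r :: "'l rel" and K :: "'k rel" and \<kappa> :: "'l rel" and S :: "'k \<Rightarrow> 'w set"
    and Q :: "(('w \<times> 'k) \<times> ('w \<times> 'k)) set"
  assumes r: "Card_order r" "infinite (Field r)"
    and K: "Card_order K" "K =o cardSuc r"
    and \<kappa>: "strongly_compact \<kappa> TYPE('k set)" "\<kappa> <o r"
    and D: "D \<subseteq> Field K" "\<not> |D| \<le>o r"
    and narrow: "\<forall>\<alpha>\<in>D. S \<alpha> \<subseteq> Ws" "|Ws| <o \<kappa>"
    and linked: "\<forall>\<alpha>\<in>D. \<forall>\<beta>\<in>D. ord_less K \<alpha> \<beta> \<longrightarrow> (\<exists>a\<in>S \<alpha>. \<exists>b\<in>S \<beta>. ((a, \<alpha>), (b, \<beta>)) \<in> Q)"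
    and coherent: "\<forall>\<alpha>\<in>D. \<forall>\<beta>\<in>D. \<forall>\<gamma>\<in>D. ord_less K \<alpha> \<beta> \<and> ord_less K \<beta> \<gamma> \<longrightarrow>
        (\<forall>a\<in>S \<alpha>. \<forall>b\<in>S \<beta>. \<forall>c\<in>S \<gamma>.
           ((a, \<alpha>), (c, \<gamma>)) \<in> Q \<and> ((b, \<beta>), (c, \<gamma>)) \<in> Q \<longrightarrow> ((a, \<alpha>), (b, \<beta>)) \<in> Q)"
  obtains D' :: "'k set" and f :: "'k \<Rightarrow> 'w"
  where "D' \<subseteq> D" and "\<not> |D'| \<le>o r" and "\<forall>\<alpha>\<in>D'. f \<alpha> \<in> S \<alpha>"
    and "\<forall>\<alpha>\<in>D'. \<forall>\<alpha>'\<in>D'. ord_less K \<alpha> \<alpha>' \<longrightarrow> ((f \<alpha>, \<alpha>), (f \<alpha>', \<alpha>')) \<in> Q"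
proof -
  have "|Ws \<times> Ws| <o \<kappa>"
    by (rule card_of_Times_ordLess_infinite_Field[OF strongly_compact_infinite(2,1)[OF \<kappa>(1)]
          narrow(2) narrow(2)])
  (* A parameter (a, e) puts node a of level \<alpha> below node e of level \<beta>;
     only e has to be shared by the surviving levels. *)
  moreover have "\<exists>p\<in>Ws \<times> Ws. fst p \<in> S \<alpha> \<and> snd p \<in> S \<beta> \<and> ((fst p, \<alpha>), (snd p, \<beta>)) \<in> Q"
    if \<alpha>\<beta>: "\<alpha> \<in> D" "\<beta> \<in> D" "ord_less K \<alpha> \<beta>" for \<alpha> \<beta>
  proof -
    obtain a b where "a \<in> S \<alpha>" "b \<in> S \<beta>" "((a, \<alpha>), (b, \<beta>)) \<in> Q" using linked \<alpha>\<beta> by blast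
    moreover have "(a, b) \<in> Ws \<times> Ws" using narrow(1) \<alpha>\<beta> calculation by blast
    ultimately show ?thesis by (intro bexI[of _ "(a, b)"]) simp_all
  qed
  ultimately obtain D' :: "'k set" and g :: "'k \<Rightarrow> 'w \<times> 'w" and e :: 'w
    where D': "D' \<subseteq> D" "\<not> |D'| \<le>o r" and "e \<in> snd ` (Ws \<times> Ws)"
    and g: "\<forall>\<alpha>\<in>D'. snd (g \<alpha>) = e"
    and common: "\<forall>\<alpha>\<in>D'. \<forall>\<alpha>'\<in>D'. \<exists>\<beta>\<in>D. ord_less K \<alpha> \<beta> \<and> ord_less K \<alpha>' \<beta> \<and>
           (fst (g \<alpha>) \<in> S \<alpha> \<and> snd (g \<alpha>) \<in> S \<beta> \<and> ((fst (g \<alpha>), \<alpha>), (snd (g \<alpha>), \<beta>)) \<in> Q) \<and>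
           (fst (g \<alpha>') \<in> S \<alpha>' \<and> snd (g \<alpha>') \<in> S \<beta> \<and> ((fst (g \<alpha>'), \<alpha>'), (snd (g \<alpha>'), \<beta>)) \<in> Q)"
    by (rule uniform_ultrafilter_thinning[OF r K \<kappa> D, where \<pi> = snd and
          \<Phi> = "\<lambda>\<alpha> p \<beta>. fst p \<in> S \<alpha> \<and> snd p \<in> S \<beta> \<and> ((fst p, \<alpha>), (snd p, \<beta>)) \<in> Q"])
  show ?thesis
  proof (rule that[of D' "fst \<circ> g"])
    show "\<forall>\<alpha>\<in>D'. (fst \<circ> g) \<alpha> \<in> S \<alpha>" using common by fastforce
    show "\<forall>\<alpha>\<in>D'. \<forall>\<alpha>'\<in>D'. ord_less K \<alpha> \<alpha>' \<longrightarrow> (((fst \<circ> g) \<alpha>, \<alpha>), ((fst \<circ> g) \<alpha>', \<alpha>')) \<in> Q"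
    proof (intro ballI impI)
      fix \<alpha> \<alpha>' assume \<alpha>: "\<alpha> \<in> D'" "\<alpha>' \<in> D'" "ord_less K \<alpha> \<alpha>'"
      then obtain \<beta> where "\<beta> \<in> D" "ord_less K \<alpha>' \<beta>" "snd (g \<alpha>) \<in> S \<beta>"
        "fst (g \<alpha>) \<in> S \<alpha>" "((fst (g \<alpha>), \<alpha>), (snd (g \<alpha>), \<beta>)) \<in> Q"
        "fst (g \<alpha>') \<in> S \<alpha>'" "((fst (g \<alpha>'), \<alpha>'), (snd (g \<alpha>'), \<beta>)) \<in> Q"
        using common by blast
      moreover have "snd (g \<alpha>') = snd (g \<alpha>)" using g \<alpha> by simp
      ultimately show "(((fst \<circ> g) \<alpha>, \<alpha>), ((fst \<circ> g) \<alpha>', \<alpha>')) \<in> Q"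
        using coherent \<alpha> D'(1) by (simp, blast)
    qed
  qed (use D' in auto)
qed

lemma branch_of_chain:
  fixes r :: "'l rel" and K :: "'k rel"
  assumes r: "Card_order r" and K: "Card_order K" "K =o cardSuc r"
    and D: "D \<subseteq> Field K" and D': "D' \<subseteq> D" "\<not> |D'| \<le>o r" and i: "i \<in> I"
    and f: "\<forall>\<alpha>\<in>D'. f \<alpha> \<in> T \<alpha>"
    and chain: "\<forall>\<alpha>\<in>D'. \<forall>\<alpha>'\<in>D'. ord_less K \<alpha> \<alpha>' \<longrightarrow> ((f \<alpha>, \<alpha>), (f \<alpha>', \<alpha>')) \<in> R i"
  shows "is_branch D T I R ((\<lambda>\<alpha>. (f \<alpha>, \<alpha>)) ` D')" and "|(\<lambda>\<alpha>. (f \<alpha>, \<alpha>)) ` D'| =o K"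
proof -
  have "(\<lambda>\<alpha>. (f \<alpha>, \<alpha>)) ` D' \<subseteq> nodes D T" using f D' unfolding nodes_def by auto
  moreover have "x = y \<or> (x, y) \<in> R i \<or> (y, x) \<in> R i"
    if "x \<in> (\<lambda>\<alpha>. (f \<alpha>, \<alpha>)) ` D'" "y \<in> (\<lambda>\<alpha>. (f \<alpha>, \<alpha>)) ` D'" for x y
    using that chain ord_less_total[OF K(1)] D D' by blast
  ultimately show "is_branch D T I R ((\<lambda>\<alpha>. (f \<alpha>, \<alpha>)) ` D')"
    unfolding is_branch_def using i by blast
  have "bij_betw (\<lambda>\<alpha>. (f \<alpha>, \<alpha>)) D' ((\<lambda>\<alpha>. (f \<alpha>, \<alpha>)) ` D')"
    by (rule bij_betw_imageI) (auto simp: inj_on_def)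
  hence iso: "|D'| =o |(\<lambda>\<alpha>. (f \<alpha>, \<alpha>)) ` D'|" using card_of_ordIso by blast
  show "|(\<lambda>\<alpha>. (f \<alpha>, \<alpha>)) ` D'| =o K"
  proof (rule card_of_ordIso_cardSuc[OF r K])
    show "\<not> |(\<lambda>\<alpha>. (f \<alpha>, \<alpha>)) ` D'| \<le>o r" using D'(2) ordIso_ordLeq_trans[OF iso] by blast
    have "|D'| \<le>o |Field K|" using D D' by (intro card_of_mono1) blast
    thus "|(\<lambda>\<alpha>. (f \<alpha>, \<alpha>)) ` D'| \<le>o |Field K|" by (rule ordLeq_transitive[OF card_of_image])
  qed
qed

theorem mainTheorem4:
  fixes r :: "'l rel" and K :: "'k rel" and W :: "'w set" and D :: "'k set"
    and T :: "'k \<Rightarrow> 'w set" and I :: "'i set"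
    and R :: "'i \<Rightarrow> (('w \<times> 'k) \<times> ('w \<times> 'k)) set"
  assumes lam_card: "Card_order r"
    and lam_singular: "\<not> regularCard r"
    and lam_limit_sc: "\<forall>\<mu>::'l rel. Card_order \<mu> \<and> ordLess2 \<mu> r \<longrightarrow>
           (\<exists>\<kappa>::'l rel. ordLess2 \<mu> \<kappa> \<and> ordLess2 \<kappa> r \<and> strongly_compact \<kappa> TYPE('k set))"
    and succ_card: "Card_order K"
    and succ_is_succ: "ordIso2 K (cardSuc r)"
    and sys: "strong_lam_system r K W D T I R"
    and small_index: "ordLess2 (card_of I) r"
  shows "\<exists>B. is_branch D T I R B \<and> ordIso2 (card_of B) K"
proof -
  note r = lam_card infinite_Field_if_limit_of_strongly_compact[OF lam_card lam_singular lam_limit_sc]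
  note K = succ_card succ_is_succ
  note DK = strong_lam_systemD(2)[OF sys]
  obtain C :: "'l set" and Wc where C: "|C| <o r" and Wc: "\<forall>c\<in>C. |Wc c| <o r"
    and W: "W \<subseteq> (\<Union>c\<in>C. Wc c)"
    by (rule singular_cover_by_small_sets[OF lam_card lam_singular strong_lam_systemD(1)[OF sys]])
  obtain \<kappa>1 :: "'l rel" where \<kappa>1: "|C \<times> I| <o \<kappa>1" "\<kappa>1 <o r" "strongly_compact \<kappa>1 TYPE('k set)"
    by (rule strongly_compact_above[OF lam_card lam_limit_sc
          card_of_Times_ordLess_infinite_Field[OF r(2,1) C small_index]])
  obtain i c D1 where i: "i \<in> I" and c: "c \<in> C" and D1: "D1 \<subseteq> D" "\<not> |D1| \<le>o r"
    and linked: "\<forall>\<alpha>\<in>D1. \<forall>\<alpha>'\<in>D1. ord_less K \<alpha> \<alpha>' \<longrightarrow>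
           (\<exists>a\<in>T \<alpha> \<inter> Wc c. \<exists>a'\<in>T \<alpha>' \<inter> Wc c. ((a, \<alpha>), (a', \<alpha>')) \<in> R i)"
    by (rule strong_system_narrow_subsystem[OF r K sys W \<kappa>1(3,2,1)])
  obtain \<kappa>2 :: "'l rel" where \<kappa>2: "|Wc c| <o \<kappa>2" "\<kappa>2 <o r" "strongly_compact \<kappa>2 TYPE('k set)"
    by (rule strongly_compact_above[OF lam_card lam_limit_sc Wc[rule_format, OF c]])
  have coherent: "\<forall>\<alpha>\<in>D1. \<forall>\<beta>\<in>D1. \<forall>\<gamma>\<in>D1. ord_less K \<alpha> \<beta> \<and> ord_less K \<beta> \<gamma> \<longrightarrow>
      (\<forall>a\<in>T \<alpha> \<inter> Wc c. \<forall>b\<in>T \<beta> \<inter> Wc c. \<forall>e\<in>T \<gamma> \<inter> Wc c.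
         ((a, \<alpha>), (e, \<gamma>)) \<in> R i \<and> ((b, \<beta>), (e, \<gamma>)) \<in> R i \<longrightarrow> ((a, \<alpha>), (b, \<beta>)) \<in> R i)"
    using strong_lam_systemD(6)[OF sys] i D1(1) by blast
  obtain D2 f where D2: "D2 \<subseteq> D1" "\<not> |D2| \<le>o r" and f: "\<forall>\<alpha>\<in>D2. f \<alpha> \<in> T \<alpha> \<inter> Wc c"
    and chain: "\<forall>\<alpha>\<in>D2. \<forall>\<alpha>'\<in>D2. ord_less K \<alpha> \<alpha>' \<longrightarrow> ((f \<alpha>, \<alpha>), (f \<alpha>', \<alpha>')) \<in> R i"
    by (rule narrow_system_chain[OF r K \<kappa>2(3,2) _ D1(2) _ \<kappa>2(1) linked coherent])
      (use D1(1) DK in auto)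
  have "D2 \<subseteq> D" and "\<forall>\<alpha>\<in>D2. f \<alpha> \<in> T \<alpha>" using D2(1) D1(1) f by auto
  from branch_of_chain[where R = R, OF lam_card K DK this(1) D2(2) i this(2) chain]
  show ?thesis by blast
qed

end
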